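(* Let $W_0\in\mathcal{W}$ and let $S(W)\in\mathbb{R}^{|I||J|}$ be the global similarity vector obtained by stacking $S_1(W),\dots,S_{|I|}(W)$. Put $s_0=S(W_0)$, $s_{0i}=S_i(W_0)$, $s_{0i,j}=(S_i(W_0))_j$. Then the Jacobian $S_0=dS_{W_0}\in\mathbb{R}^{|I||J|\times|I||J|}$ of $S$ at $W_0$ is the block matrix $(A_{ik}(W_0))_{i,k\in I}$ with $|J|\times|J|$ blocks given, for $V_k\in T_0$, by $$A_{ik}(W_0)(V_k)=\begin{cases}w_{ik}\,\Pi_{s_{0i}}\Big(\frac{V_k}{W_{0k}}\Big), & k\in\mathcal{N}_i,\\ 0,& k\notin\mathcal{N}_i,\end{cases}$$ and for $k\in\mathcal{N}_i$ the entries are, for $j,l\in J$, $$\big(A_{ik}(W_0)\big)_{jl}=w_{ik}\begin{cases}(1-s_{0i,j})\dfrac{s_{0i,j}}{W_{0k,j}}, & j=l,\\[2mm] -s_{0i,j}\dfrac{s_{0i,l}}{W_{0k,l}}, & j\neq l.\end{cases}$$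
   Context: Let $G=(I,E)$ be a finite undirected graph with neighborhoods $\mathcal{N}_i=\{k\in I: ik\in E\}$, and weights $w_{ik}>0$ with $\sum_{k\in\mathcal{N}_i}w_{ik}=1$. Let $J$ be a finite label set. Operations on vectors are componentwise. $\mathcal{S}=\{p\in\mathbb{R}^{|J|}: p_j>0,\ \langle\mathbb{1},p\rangle=1\}$, $T_0=\{v:\langle\mathbb{1},v\rangle=0\}$. For $p\in\mathcal{S}$, $\Pi_p(z)=(\mathrm{Diag}(p)-pp^\top)z$ and $\exp_p(z)=\frac{p\,e^{z}}{\langle p,e^{z}\rangle}$ for $z\in\mathbb{R}^{|J|}$. $\mathcal{W}=\mathcal{S}^{|I|}$ with points $W=(W_i)_{i\in I}$; for $W_0\in\mathcal{W}$, $W_{0k}\in\mathcal{S}$ denotes its $k$-th block and $W_{0k,j}$ its $j$-th entry. Given distance vectors $D_i\in\mathbb{R}^{|J|}$ and $\rho>0$, $L_i(W_i)=\frac{W_i e^{-D_i/\rho}}{\langle W_i,e^{-D_i/\rho}\rangle}$; the geometric mean is $\mathcal{G}^w_i(W)=\exp_{W_i}\Big(\log\frac{\prod_{k\in\mathcal{N}_i}W_k^{w_{ik}}}{W_i}\Big)$; the similarity vectors are $S_i(W)=\mathcal{G}^w_i(L(W))$ where $L(W)=(L_i(W_i))_{i\in I}$. *)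

theory Defs
  imports "HOL-Analysis.Analysis"
begin

text \<open>Labels J: finite type 'j; vectors in R^|J| are real^'j.
  Nodes I: finite type 'i; points of W = S^|I| (and of the ambient R^{|I||J|})
  are real^'j^'i, block i being W$i.\<close>

definition simplex_pt :: "real^'j \<Rightarrow> bool" where
  "simplex_pt p \<longleftrightarrow> (\<forall>j. p$j > 0) \<and> (\<Sum>j\<in>UNIV. p$j) = 1"

definition T0 :: "real^'j \<Rightarrow> bool" where
  "T0 v \<longleftrightarrow> (\<Sum>j\<in>UNIV. v$j) = 0"

definition Pi_p :: "real^'j \<Rightarrow> real^'j \<Rightarrow> real^'j" where
  "Pi_p p z = (\<chi> j. p$j * z$j - p$j * (\<Sum>l\<in>UNIV. p$l * z$l))"

definition exp_p :: "real^'j \<Rightarrow> real^'j \<Rightarrow> real^'j" where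
  "exp_p p z = (\<chi> j. p$j * exp (z$j) / (\<Sum>l\<in>UNIV. p$l * exp (z$l)))"

definition lik :: "real^'j \<Rightarrow> real \<Rightarrow> real^'j \<Rightarrow> real^'j" where
  "lik Di \<rho> Wi = (\<chi> j. Wi$j * exp (- Di$j / \<rho>) / (\<Sum>l\<in>UNIV. Wi$l * exp (- Di$l / \<rho>)))"

definition geo_mean :: "('i \<Rightarrow> 'i set) \<Rightarrow> ('i \<Rightarrow> 'i \<Rightarrow> real) \<Rightarrow> real^'j^'i \<Rightarrow> 'i \<Rightarrow> real^'j" where
  "geo_mean N w W i =
     exp_p (W$i) (\<chi> j. ln ((\<Prod>k\<in>N i. (W$k$j) powr (w i k)) / W$i$j))"

definition simil :: "('i \<Rightarrow> 'i set) \<Rightarrow> ('i \<Rightarrow> 'i \<Rightarrow> real) \<Rightarrow> real^'j^'i \<Rightarrow> real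
      \<Rightarrow> real^'j^'i \<Rightarrow> real^'j^'i" where
  "simil N w D \<rho> W = (\<chi> i. geo_mean N w (\<chi> k. lik (D$k) \<rho> (W$k)) i)"

definition jac_block :: "('i \<Rightarrow> 'i set) \<Rightarrow> ('i \<Rightarrow> 'i \<Rightarrow> real) \<Rightarrow> real^'j^'i \<Rightarrow> real
      \<Rightarrow> real^'j^'i \<Rightarrow> 'i \<Rightarrow> 'i \<Rightarrow> 'j \<Rightarrow> 'j \<Rightarrow> real" where
  "jac_block N w D \<rho> W0 i k j l =
     (let s = simil N w D \<rho> W0 $ i in
      if k \<in> N i then
        w i k * (if j = l then (1 - s$j) * s$j / W0$k$j else - s$j * s$l / W0$k$l)
      else 0)"

end

theory Submission
  imports Defs
begin

text \<open>For positive W the normalising constants of the likelihoods only shift the logarithm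
  of the geometric mean by a constant independent of the label j, so S_i(W) is the softmax of
  the score a_ij(W) = \<Sum>k\<in>N_i. w_ik (ln W_kj - D_kj / \<rho>). The differential of the softmax
  at a is \<Pi>_{softmax a}, and the differential of a_i at W0 sends V to
  \<Sum>k\<in>N_i. w_ik V_k / W0_k. Linearity of \<Pi> splits the composite into the blocks
  w_ik \<Pi>_{s0i}(V_k / W0_k), whose matrix entries are those of jac_block.\<close>

lemma has_derivative_vec_nth [derivative_intros]:
  "(f has_derivative f') F \<Longrightarrow> ((\<lambda>x. f x $ i) has_derivative (\<lambda>h. f' h $ i)) F"
  by (rule bounded_linear.has_derivative[OF bounded_linear_vec_nth])

lemma has_derivative_vec_lambda:
  fixes f :: "'a::euclidean_space \<Rightarrow> 'i::finite \<Rightarrow> 'b::real_normed_vector"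
  assumes "\<And>i. ((\<lambda>x. f x i) has_derivative f' i) F"
  shows "((\<lambda>x. \<chi> i. f x i) has_derivative (\<lambda>h. \<chi> i. f' i h)) F"
proof -
  have "linear (f' i)" for i
    using assms has_derivative_linear by blast
  then have "linear (\<lambda>h. \<chi> i. f' i h)"
    by (intro linearI) (simp_all add: vec_eq_iff linear_add linear_scale)
  then show ?thesis
    using assms by (auto simp: has_derivative_def linear_conv_bounded_linear intro!: vec_tendstoI)
qed

definition softmax :: "real^'j::finite \<Rightarrow> real^'j" where
  "softmax a = (\<chi> j. exp (a$j) / (\<Sum>l\<in>UNIV. exp (a$l)))"

lemma has_derivative_softmax:
  fixes a :: "real^'j::finite"
  shows "(softmax has_derivative Pi_p (softmax a)) (at a within S)"
proof -
  define Z where "Z = (\<Sum>l\<in>UNIV. exp (a$l))"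
  have "Z > 0" unfolding Z_def by (simp add: sum_pos)
  have "((\<lambda>b. exp (b$j) / (\<Sum>l\<in>UNIV. exp (b$l))) has_derivative
          (\<lambda>h. Pi_p (softmax a) h $ j)) (at a within S)" for j
    apply (rule derivative_eq_intros refl has_derivative_ident | simp add: Z_def[symmetric])+
    using \<open>Z > 0\<close>
    by (simp_all add: fun_eq_iff Pi_p_def softmax_def Z_def[symmetric] field_simps
        sum_divide_distrib sum_distrib_left sum_negf)
  then have "((\<lambda>b. \<chi> j. exp (b$j) / (\<Sum>l\<in>UNIV. exp (b$l))) has_derivative
               (\<lambda>h. \<chi> j. Pi_p (softmax a) h $ j)) (at a within S)"
    by (rule has_derivative_vec_lambda)
  then show ?thesis
    unfolding vec_lambda_eta softmax_def[abs_def, symmetric] .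
qed

lemma softmax_add_const: "softmax (\<chi> j. a$j + c) = softmax a"
  by (simp add: softmax_def exp_add vec_eq_iff sum_distrib_right[symmetric])

lemma exp_p_ln_ratio:
  assumes "\<And>j. p$j > 0" and "\<And>j. q j > 0"
  shows "exp_p p (\<chi> j. ln (q j / p$j)) = (\<chi> j. q j / (\<Sum>l\<in>UNIV. q l))"
proof -
  have "p$j * exp (ln (q j / p$j)) = q j" for j
    using assms(1)[of j] assms(2)[of j] by simp
  then show ?thesis
    by (simp add: exp_p_def vec_eq_iff)
qed

lemma geo_mean_eq_softmax:
  fixes W :: "real^'j::finite^'i::finite"
  assumes "\<And>k j. W$k$j > 0"
  shows "geo_mean N w W i = softmax (\<chi> j. \<Sum>k\<in>N i. w i k * ln (W$k$j))"
proof -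
  have prod_eq: "(\<Prod>k\<in>N i. W$k$j powr w i k) = exp (\<Sum>k\<in>N i. w i k * ln (W$k$j))" for j
    using assms by (simp add: powr_def exp_sum less_imp_neq[symmetric] mult.commute)
  show ?thesis
    unfolding geo_mean_def
    by (subst exp_p_ln_ratio) (simp_all add: assms prod_eq softmax_def)
qed

lemma lik_pos:
  assumes "\<And>j. Wi$j > 0"
  shows "lik Di \<rho> Wi $ j > 0"
  using assms by (simp add: lik_def sum_pos)

lemma ln_lik:
  assumes "\<And>j. Wi$j > 0"
  shows "ln (lik Di \<rho> Wi $ j) = ln (Wi$j) - Di$j / \<rho> - ln (\<Sum>l\<in>UNIV. Wi$l * exp (- Di$l / \<rho>))"
proof -
  have "(\<Sum>l\<in>UNIV. Wi$l * exp (- Di$l / \<rho>)) > 0"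
    by (intro sum_pos) (simp_all add: assms)
  then show ?thesis
    using assms[of j] by (simp add: lik_def ln_div ln_mult)
qed

definition log_score :: "('i \<Rightarrow> 'i set) \<Rightarrow> ('i \<Rightarrow> 'i \<Rightarrow> real) \<Rightarrow> real^'j^'i \<Rightarrow> real
      \<Rightarrow> real^'j^'i \<Rightarrow> real^'j^'i" where
  "log_score N w D \<rho> W = (\<chi> i j. \<Sum>k\<in>N i. w i k * (ln (W$k$j) - D$k$j / \<rho>))"

lemma simil_eq_softmax_log_score:
  fixes W :: "real^'j::finite^'i::finite"
  assumes "\<And>k j. W$k$j > 0"
  shows "simil N w D \<rho> W $ i = softmax (log_score N w D \<rho> W $ i)"
proof -
  define Z where "Z k = (\<Sum>l\<in>UNIV. W$k$l * exp (- D$k$l / \<rho>))" for k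
  define C where "C = (\<Sum>k\<in>N i. w i k * ln (Z k))"
  have "(\<Sum>k\<in>N i. w i k * ln (lik (D$k) \<rho> (W$k) $ j)) = log_score N w D \<rho> W $ i $ j - C" for j
    using assms
    by (simp add: ln_lik Z_def C_def log_score_def right_diff_distrib sum_subtractf)
  then show ?thesis
    using assms softmax_add_const[of "log_score N w D \<rho> W $ i" "- C"] unfolding simil_def
    by (simp add: geo_mean_eq_softmax lik_pos)
qed

lemma has_derivative_log_score:
  fixes W0 :: "real^'j::finite^'i::finite"
  assumes "\<And>k j. W0$k$j > 0"
  shows "(log_score N w D \<rho> has_derivative
           (\<lambda>V. \<chi> i j. \<Sum>k\<in>N i. w i k * (V$k$j / W0$k$j))) (at W0)"
  unfolding log_score_def[abs_def]
  by (intro has_derivative_vec_lambda)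
     (rule derivative_eq_intros refl has_derivative_ident | simp add: assms divide_inverse)+

lemma eventually_at_pos_entries:
  fixes W0 :: "real^'j::finite^'i::finite"
  assumes "\<And>k j. W0$k$j > 0"
  shows "eventually (\<lambda>W. \<forall>k j. W$k$j > 0) (at W0)"
proof (intro eventually_all_finite allI)
  fix k j
  have "((\<lambda>W. W$k$j) \<longlongrightarrow> W0$k$j) (at W0)"
    by (intro tendsto_intros)
  then show "eventually (\<lambda>W. W$k$j > 0) (at W0)"
    using assms order_tendstoD(1) by blast
qed

lemma has_derivative_simil:
  fixes W0 :: "real^'j::finite^'i::finite"
  assumes pos: "\<And>k j. W0$k$j > 0"
  shows "(simil N w D \<rho> has_derivative
           (\<lambda>V. \<chi> i. Pi_p (simil N w D \<rho> W0 $ i) (\<chi> j. \<Sum>k\<in>N i. w i k * (V$k$j / W0$k$j)))) (at W0)"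
proof (rule has_derivative_transform_eventually)
  have "((\<lambda>W. log_score N w D \<rho> W $ i) has_derivative
          (\<lambda>V. \<chi> j. \<Sum>k\<in>N i. w i k * (V$k$j / W0$k$j))) (at W0)" for i
    using has_derivative_vec_nth[OF has_derivative_log_score[OF pos]] by simp
  then have "((\<lambda>W. softmax (log_score N w D \<rho> W $ i)) has_derivative
          (\<lambda>V. Pi_p (softmax (log_score N w D \<rho> W0 $ i)) (\<chi> j. \<Sum>k\<in>N i. w i k * (V$k$j / W0$k$j))))
          (at W0)" for i
    by (rule has_derivative_compose[OF _ has_derivative_softmax])
  then show "((\<lambda>W. \<chi> i. softmax (log_score N w D \<rho> W $ i)) has_derivative
          (\<lambda>V. \<chi> i. Pi_p (simil N w D \<rho> W0 $ i) (\<chi> j. \<Sum>k\<in>N i. w i k * (V$k$j / W0$k$j)))) (at W0)"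
    by (intro has_derivative_vec_lambda) (simp add: simil_eq_softmax_log_score pos)
  show "\<forall>\<^sub>F W in at W0. (\<chi> i. softmax (log_score N w D \<rho> W $ i)) = simil N w D \<rho> W"
    using eventually_at_pos_entries[OF pos]
    by eventually_elim (simp add: vec_eq_iff simil_eq_softmax_log_score)
  show "(\<chi> i. softmax (log_score N w D \<rho> W0 $ i)) = simil N w D \<rho> W0"
    by (simp add: vec_eq_iff simil_eq_softmax_log_score pos)
qed simp

lemma linear_Pi_p: "linear (Pi_p p)"
  by (intro linearI) (simp_all add: Pi_p_def vec_eq_iff sum.distrib algebra_simps sum_distrib_left)

lemma jac_block_row_in_neighbourhood:
  assumes "k \<in> N i"
  shows "(\<chi> j. \<Sum>l\<in>UNIV. jac_block N w D \<rho> W0 i k j l * V$l)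
           = w i k *\<^sub>R Pi_p (simil N w D \<rho> W0 $ i) (\<chi> j. V$j / W0$k$j)"
proof -
  define s where "s = simil N w D \<rho> W0 $ i"
  define x where "x = (\<chi> l. V$l / W0$k$l)"
  have "jac_block N w D \<rho> W0 i k j l * V$l
      = w i k * ((if l = j then s$l * x$l else 0) - s$j * (s$l * x$l))" for j l
    using assms by (simp add: jac_block_def Let_def s_def x_def algebra_simps diff_divide_distrib)
  then have "(\<Sum>l\<in>UNIV. jac_block N w D \<rho> W0 i k j l * V$l)
      = w i k * (s$j * x$j - s$j * (\<Sum>l\<in>UNIV. s$l * x$l))" for j
    by (simp add: sum_subtractf flip: sum_distrib_left)
  then show ?thesis
    by (simp add: vec_eq_iff Pi_p_def s_def x_def[symmetric])
qed

lemma jac_block_row_outside_neighbourhood: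
  "k \<notin> N i \<Longrightarrow> (\<chi> j. \<Sum>l\<in>UNIV. jac_block N w D \<rho> W0 i k j l * V$l) = 0"
  by (simp add: jac_block_def vec_eq_iff)

lemma jac_block_apply:
  fixes V W0 :: "real^'j::finite^'i::finite"
  shows "(\<chi> j. \<Sum>k\<in>UNIV. \<Sum>l\<in>UNIV. jac_block N w D \<rho> W0 i k j l * V$k$l)
           = Pi_p (simil N w D \<rho> W0 $ i) (\<chi> j. \<Sum>k\<in>N i. w i k * (V$k$j / W0$k$j))"
proof -
  have "(\<chi> j. \<Sum>k\<in>UNIV. \<Sum>l\<in>UNIV. jac_block N w D \<rho> W0 i k j l * V$k$l)
      = (\<Sum>k\<in>UNIV. \<chi> j. \<Sum>l\<in>UNIV. jac_block N w D \<rho> W0 i k j l * V$k$l)"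
    by (simp add: vec_eq_iff)
  also have "\<dots> = (\<Sum>k\<in>N i. \<chi> j. \<Sum>l\<in>UNIV. jac_block N w D \<rho> W0 i k j l * V$k$l)"
    by (rule sum.mono_neutral_right) (simp_all add: jac_block_row_outside_neighbourhood)
  also have "\<dots> = (\<Sum>k\<in>N i. w i k *\<^sub>R Pi_p (simil N w D \<rho> W0 $ i) (\<chi> j. V$k$j / W0$k$j))"
    by (simp add: jac_block_row_in_neighbourhood)
  also have "\<dots> = Pi_p (simil N w D \<rho> W0 $ i) (\<Sum>k\<in>N i. w i k *\<^sub>R (\<chi> j. V$k$j / W0$k$j))"
    by (simp add: linear_sum[OF linear_Pi_p] linear_scale[OF linear_Pi_p])
  also have "(\<Sum>k\<in>N i. w i k *\<^sub>R (\<chi> j. V$k$j / W0$k$j)) = (\<chi> j. \<Sum>k\<in>N i. w i k * (V$k$j / W0$k$j))"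
    by (simp add: vec_eq_iff)
  finally show ?thesis .
qed

theorem proposition4p4:
  fixes E :: "'i::finite \<Rightarrow> 'i \<Rightarrow> bool"
    and w :: "'i \<Rightarrow> 'i \<Rightarrow> real"
    and D :: "real^'j::finite^'i"
    and \<rho> :: real
    and W0 :: "real^'j^'i"
  defines "N \<equiv> (\<lambda>i. {k. E i k})"
  assumes sym: "\<And>i k. E i k \<Longrightarrow> E k i"
    and wpos: "\<And>i k. k \<in> N i \<Longrightarrow> w i k > 0"
    and wsum: "\<And>i. (\<Sum>k\<in>N i. w i k) = 1"
    and rho: "\<rho> > 0"
    and W0: "\<And>i. simplex_pt (W0$i)"
  shows "(simil N w D \<rho> has_derivative
            (\<lambda>V. \<chi> i j. \<Sum>k\<in>UNIV. \<Sum>l\<in>UNIV. jac_block N w D \<rho> W0 i k j l * V$k$l)) (at W0)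
    \<and> (\<forall>i k (V::real^'j). k \<in> N i \<longrightarrow> T0 V \<longrightarrow>
          (\<chi> j. \<Sum>l\<in>UNIV. jac_block N w D \<rho> W0 i k j l * V$l)
            = w i k *\<^sub>R Pi_p (simil N w D \<rho> W0 $ i) (\<chi> j. V$j / W0$k$j))
    \<and> (\<forall>i k (V::real^'j). k \<notin> N i \<longrightarrow>
          (\<chi> j. \<Sum>l\<in>UNIV. jac_block N w D \<rho> W0 i k j l * V$l) = 0)"
proof -
  \<comment> \<open>Only the positivity of W0 matters: the computation holds for arbitrary weights and
    \<rho>, and the block identity does not need V \<in> T0.\<close>
  have pos: "\<And>k j. W0$k$j > 0"
    using W0 by (simp add: simplex_pt_def)
  show ?thesis
    using has_derivative_simil[OF pos, of N w D \<rho>]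
    by (simp add: jac_block_apply jac_block_row_in_neighbourhood jac_block_row_outside_neighbourhood)
qed

end
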